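(* Assume that (A1) $\mu_k\sim 1/k^2$, (A2) $\nabla L$ is $M$-Lipschitz, i.e. $\|\nabla L(x)-\nabla L(y)\|\le M\|x-y\|$ for all $x,y\in\mathcal H$, and that either (i) $\lambda>M\mu_0$, or (ii) there is $B>0$ with $\|\nabla L(x)\|\le B$ for all $x\in\mathcal H$. Then there exist constants $m,c>0$ such that $$\forall x\in\mathcal H,\qquad \langle Ax-\nabla L(x),x\rangle\le -m\|x\|^2+c .$$
   Context: Let $\mathcal H$ be a separable real Hilbert space with inner product $\langle\cdot,\cdot\rangle$, norm $\|\cdot\|$, and orthonormal basis $(f_k)_{k\ge0}$, and let $\mu_0\ge\mu_1\ge\cdots>0$ (the eigenvalues of the integral operator of a kernel $K$, with eigenfunctions $f_k$). The RKHS is $\mathcal H_K=\{\sum_k\alpha_kf_k:\sum_k\alpha_k^2/\mu_k<\infty\}$ with $\|\sum_k\alpha_kf_k\|_{\mathcal H_K}^2=\sum_k\alpha_k^2/\mu_k$. Fix $\lambda>0$ and let $A$ be the unbounded diagonal operator $Af_k=-(\lambda/\mu_k)f_k$ (i.e. $A=-\frac\lambda2\nabla\|\cdot\|_{\mathcal H_K}^2$), with the inequality understood for $x$ in its domain. $L:\mathcal H\to\mathbb R$ is Fréchet differentiable with gradient $\nabla L$ (Riesz representer of the Fréchet derivative) and admits a global minimizer $x^*$. *)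

theory Defs
  imports "HOL-Analysis.Analysis" "HOL-Library.Landau_Symbols"
begin

definition orthonormal_basis :: "(nat \<Rightarrow> 'a::{real_inner,complete_space}) \<Rightarrow> bool" where
  "orthonormal_basis f \<longleftrightarrow>
     (\<forall>i j. f i \<bullet> f j = (if i = j then 1 else 0)) \<and>
     (\<forall>x. (\<lambda>k. (x \<bullet> f k) *\<^sub>R f k) sums x)"

definition A_dom :: "(nat \<Rightarrow> 'a::{real_inner,complete_space}) \<Rightarrow> (nat \<Rightarrow> real) \<Rightarrow> 'a \<Rightarrow> bool" where
  "A_dom f \<mu> x \<longleftrightarrow> summable (\<lambda>k. ((x \<bullet> f k) / \<mu> k)\<^sup>2)"

definition A_op :: "real \<Rightarrow> (nat \<Rightarrow> 'a::{real_inner,complete_space}) \<Rightarrow> (nat \<Rightarrow> real) \<Rightarrow> 'a \<Rightarrow> 'a" where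
  "A_op lam f \<mu> x = (\<Sum>k. (- (lam / \<mu> k) * (x \<bullet> f k)) *\<^sub>R f k)"

end

theory Submission
  imports Defs
begin

(* By Parseval, <A x, x> = - sum_k (lam / mu_k) <x, f_k>^2 <= - (lam / mu_0) |x|^2, since the
   mu_k decrease. The gradient term -<grad L x, x> grows at most like (lam / mu_0 - d) |x|^2 + G |x|
   for some d > 0: in case (i) Lipschitz continuity gives the coefficient M < lam / mu_0, in case (ii)
   boundedness removes the quadratic term altogether. Half of the remaining -d |x|^2 absorbs G |x|. *)

lemma orthonormal_sum_norm_square:
  fixes f :: "nat \<Rightarrow> 'a::real_inner"
  assumes orthonormal: "\<And>i j. f i \<bullet> f j = (if i = j then 1 else 0)" and "finite S"
  shows "(norm (\<Sum>k\<in>S. c k *\<^sub>R f k))\<^sup>2 = (\<Sum>k\<in>S. (c k)\<^sup>2)"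
proof -
  have "(norm (\<Sum>k\<in>S. c k *\<^sub>R f k))\<^sup>2 = (\<Sum>k\<in>S. c k *\<^sub>R f k) \<bullet> (\<Sum>k\<in>S. c k *\<^sub>R f k)"
    by (simp add: power2_norm_eq_inner)
  also have "\<dots> = (\<Sum>k\<in>S. (c k)\<^sup>2)"
    using \<open>finite S\<close> by (simp add: inner_sum_left inner_sum_right orthonormal
        if_distrib power2_eq_square cong: if_cong)
  finally show ?thesis .
qed

lemma orthonormal_series_summable:
  fixes f :: "nat \<Rightarrow> 'a::{real_inner,complete_space}"
  assumes orthonormal: "\<And>i j. f i \<bullet> f j = (if i = j then 1 else 0)"
    and square_summable: "summable (\<lambda>k. (c k)\<^sup>2)"
  shows "summable (\<lambda>k. c k *\<^sub>R f k)"
proof -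
  define S where "S = (\<lambda>n. \<Sum>k<n. c k *\<^sub>R f k)"
  define T where "T = (\<lambda>n. \<Sum>k<n. (c k)\<^sup>2)"
  have dist_ordered: "(dist (S m) (S n))\<^sup>2 = dist (T m) (T n)" if "m \<le> n" for m n
  proof -
    have "S n - S m = (\<Sum>k\<in>{m..<n}. c k *\<^sub>R f k)" and "T n - T m = (\<Sum>k\<in>{m..<n}. (c k)\<^sup>2)"
      using sum_diff_nat_ivl[of 0 m n] that by (simp_all add: S_def T_def lessThan_atLeast0)
    moreover have "T m \<le> T n"
      using that unfolding T_def by (intro sum_mono2) auto
    moreover have "dist (S m) (S n) = norm (S n - S m)"
      by (simp add: dist_norm norm_minus_commute)
    ultimately show ?thesis
      using orthonormal_sum_norm_square[OF orthonormal, of "{m..<n}" c] by (simp add: dist_real_def)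
  qed
  have dist_square: "(dist (S m) (S n))\<^sup>2 = dist (T m) (T n)" for m n
    using dist_ordered[of m n] dist_ordered[of n m] by (cases "m \<le> n") (simp_all add: dist_commute)
  have "Cauchy T"
    using square_summable by (simp add: summable_iff_convergent Cauchy_convergent_iff T_def)
  have "Cauchy S"
  proof (rule metric_CauchyI)
    fix e :: real assume "e > 0"
    then obtain N where N: "\<And>m n. m \<ge> N \<Longrightarrow> n \<ge> N \<Longrightarrow> dist (T m) (T n) < e\<^sup>2"
      using metric_CauchyD[OF \<open>Cauchy T\<close>, of "e\<^sup>2"] \<open>e > 0\<close> by auto
    have "dist (S m) (S n) < e" if "m \<ge> N" "n \<ge> N" for m n
    proof (rule power2_less_imp_less)
      show "(dist (S m) (S n))\<^sup>2 < e\<^sup>2"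
        using N[OF that] by (simp only: dist_square)
    qed (use \<open>e > 0\<close> in simp)
    then show "\<exists>N. \<forall>m\<ge>N. \<forall>n\<ge>N. dist (S m) (S n) < e" by blast
  qed
  then show ?thesis
    by (simp add: summable_iff_convergent Cauchy_convergent_iff S_def)
qed

lemma Parseval_orthonormal_basis:
  assumes "orthonormal_basis f"
  shows "(\<lambda>k. (x \<bullet> f k)\<^sup>2) sums (norm x)\<^sup>2"
proof -
  have "(\<lambda>k. (x \<bullet> f k) *\<^sub>R f k) sums x"
    using assms unfolding orthonormal_basis_def by blast
  then have "(\<lambda>k. ((x \<bullet> f k) *\<^sub>R f k) \<bullet> x) sums (x \<bullet> x)"
    by (rule bounded_linear.sums[OF bounded_linear_inner_left])
  then show ?thesis
    unfolding power2_norm_eq_inner by (simp add: inner_commute power2_eq_square)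
qed

lemma A_op_inner_sums:
  assumes onb: "orthonormal_basis f" and dom: "A_dom f \<mu> x"
  shows "(\<lambda>k. - (lam / \<mu> k) * (x \<bullet> f k)\<^sup>2) sums (A_op lam f \<mu> x \<bullet> x)"
proof -
  have square_summable: "summable (\<lambda>k. (- (lam / \<mu> k) * (x \<bullet> f k))\<^sup>2)"
    using summable_mult[OF dom[unfolded A_dom_def], of "lam\<^sup>2"]
    by (simp add: power2_eq_square algebra_simps)
  have orthonormal: "\<And>i j. f i \<bullet> f j = (if i = j then 1 else 0)"
    using onb unfolding orthonormal_basis_def by blast
  have "summable (\<lambda>k. (- (lam / \<mu> k) * (x \<bullet> f k)) *\<^sub>R f k)"
    by (rule orthonormal_series_summable[OF orthonormal square_summable])
  then have "(\<lambda>k. ((- (lam / \<mu> k) * (x \<bullet> f k)) *\<^sub>R f k) \<bullet> x) sums (A_op lam f \<mu> x \<bullet> x)"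
    unfolding A_op_def by (intro bounded_linear.sums[OF bounded_linear_inner_left] summable_sums)
  then show ?thesis
    by (simp add: inner_commute power2_eq_square mult.assoc)
qed

lemma A_op_inner_le:
  assumes onb: "orthonormal_basis f" and dom: "A_dom f \<mu> x"
    and mu_pos: "\<And>k. \<mu> k > 0" and mu_mono: "antimono \<mu>" and lam_pos: "lam > 0"
  shows "A_op lam f \<mu> x \<bullet> x \<le> - (lam / \<mu> 0) * (norm x)\<^sup>2"
proof (rule sums_le[OF _ A_op_inner_sums[OF onb dom]])
  show "(\<lambda>k. - (lam / \<mu> 0) * (x \<bullet> f k)\<^sup>2) sums (- (lam / \<mu> 0) * (norm x)\<^sup>2)"
    by (rule sums_mult[OF Parseval_orthonormal_basis[OF onb]])
  fix k
  have "lam / \<mu> 0 \<le> lam / \<mu> k"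
    using mu_mono mu_pos lam_pos unfolding antimono_def by (intro divide_left_mono) auto
  then show "- (lam / \<mu> k) * (x \<bullet> f k)\<^sup>2 \<le> - (lam / \<mu> 0) * (x \<bullet> f k)\<^sup>2"
    using mult_right_mono[of "lam / \<mu> 0" "lam / \<mu> k" "(x \<bullet> f k)\<^sup>2"] by simp
qed

lemma quadratic_absorbs_linear:
  fixes a b t :: real
  assumes "a > 0"
  shows "- a * t\<^sup>2 + b * t \<le> - (a / 2) * t\<^sup>2 + b\<^sup>2 / (2 * a)"
proof -
  have "0 \<le> (a / 2) * (t - b / a)\<^sup>2" using assms by simp
  also have "\<dots> = (a / 2) * t\<^sup>2 - b * t + b\<^sup>2 / (2 * a)"
    using assms by (simp add: power2_eq_square field_simps)
  finally show ?thesis by simp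
qed

lemma lipschitz_neg_inner_self_le:
  fixes g :: "'a::real_inner \<Rightarrow> 'a"
  assumes lipschitz: "\<And>x y. norm (g x - g y) \<le> M * norm (x - y)"
  shows "- (g x \<bullet> x) \<le> M * (norm x)\<^sup>2 + norm (g 0) * norm x"
proof -
  have "\<bar>(g x - g 0) \<bullet> x\<bar> \<le> norm (g x - g 0) * norm x"
    by (rule Cauchy_Schwarz_ineq2)
  also have "\<dots> \<le> M * (norm x)\<^sup>2"
    using mult_right_mono[OF lipschitz[of x 0] norm_ge_zero[of x]]
    by (simp add: power2_eq_square mult.assoc)
  finally show ?thesis
    using Cauchy_Schwarz_ineq2[of "g 0" x] by (simp add: inner_diff_left)
qed

lemma bounded_neg_inner_self_le:
  fixes g :: "'a::real_inner \<Rightarrow> 'a"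
  assumes "norm (g x) \<le> B"
  shows "- (g x \<bullet> x) \<le> B * norm x"
  using Cauchy_Schwarz_ineq2[of "g x" x] mult_right_mono[OF assms norm_ge_zero[of x]] by linarith

lemma dissipativity_from_gradient_growth:
  fixes Op g :: "'a::real_inner \<Rightarrow> 'a"
  assumes Op_le: "\<And>x. P x \<Longrightarrow> Op x \<bullet> x \<le> - a * (norm x)\<^sup>2"
    and g_growth: "\<And>x. - (g x \<bullet> x) \<le> (a - d) * (norm x)\<^sup>2 + G * norm x"
    and "d > 0"
  shows "\<exists>m>0. \<exists>c>0. \<forall>x. P x \<longrightarrow> (Op x - g x) \<bullet> x \<le> - m * (norm x)\<^sup>2 + c"
proof (intro exI conjI allI impI)
  show "d / 2 > 0" and "G\<^sup>2 / (2 * d) + 1 > 0"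
    using \<open>d > 0\<close> by (simp_all add: add_nonneg_pos)
  fix x assume "P x"
  have "(Op x - g x) \<bullet> x \<le> - d * (norm x)\<^sup>2 + G * norm x"
    using Op_le[OF \<open>P x\<close>] g_growth[of x] by (simp add: inner_diff_left algebra_simps)
  also have "\<dots> \<le> - (d / 2) * (norm x)\<^sup>2 + G\<^sup>2 / (2 * d)"
    using quadratic_absorbs_linear[OF \<open>d > 0\<close>] .
  finally show "(Op x - g x) \<bullet> x \<le> - (d / 2) * (norm x)\<^sup>2 + (G\<^sup>2 / (2 * d) + 1)"
    by simp
qed

theorem proposition1:
  fixes f :: "nat \<Rightarrow> 'a::{real_inner,complete_space}"
    and \<mu> :: "nat \<Rightarrow> real" and lam M :: real
    and L :: "'a \<Rightarrow> real" and gradL :: "'a \<Rightarrow> 'a"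
  assumes onb: "orthonormal_basis f"
    and mu_pos: "\<And>k. \<mu> k > 0"
    and mu_mono: "antimono \<mu>"
    and lam_pos: "lam > 0"
    and L_deriv: "\<And>x. (L has_derivative (\<lambda>h. gradL x \<bullet> h)) (at x)"
    and L_min: "\<exists>xs. \<forall>x. L xs \<le> L x"
    and A1: "\<mu> \<in> \<Theta>(\<lambda>k. 1 / (real k)\<^sup>2)"
    and A2: "\<And>x y. norm (gradL x - gradL y) \<le> M * norm (x - y)"
    and cases: "lam > M * \<mu> 0 \<or> (\<exists>B>0. \<forall>x. norm (gradL x) \<le> B)"
  shows "\<exists>m>0. \<exists>c>0. \<forall>x. A_dom f \<mu> x \<longrightarrow>
           (A_op lam f \<mu> x - gradL x) \<bullet> x \<le> - m * (norm x)\<^sup>2 + c"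
proof -
  from cases consider "lam / \<mu> 0 - M > 0" | B where "\<And>x. norm (gradL x) \<le> B"
    using mu_pos[of 0] by (auto simp: field_simps)
  then obtain d G where "d > 0"
    and "\<And>x. - (gradL x \<bullet> x) \<le> (lam / \<mu> 0 - d) * (norm x)\<^sup>2 + G * norm x"
  proof cases
    case 1
    then show ?thesis
      using that[of "lam / \<mu> 0 - M" "norm (gradL 0)"] lipschitz_neg_inner_self_le[OF A2] by simp
  next
    case 2
    then show ?thesis
      using that[of "lam / \<mu> 0" B] bounded_neg_inner_self_le[of gradL, OF 2] lam_pos mu_pos[of 0]
      by simp
  qed
  then show ?thesis
    using A_op_inner_le[OF onb _ mu_pos mu_mono lam_pos] by (intro dissipativity_from_gradient_growth)
qed

end
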